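(* Let $S\subset\mathbb{E}^d$ be a compact set such that $\operatorname{cl}(\operatorname{int} S)=S$ and $\operatorname{int} S$ is connected. Assume that $x\in S$ is a spindle peak of $S$. Then $x\in\ker_{\mathrm{s}} S$ (in particular, $S$ is spindle starshaped).
   Context: For $x,y\in\mathbb{E}^d$ the spindle $[x,y]_{\mathrm{s}}$ is the intersection of all closed unit balls containing $x$ and $y$ if $|x-y|\le2$, and $\mathbb{E}^d$ otherwise. For $p\in S$, $\operatorname{st}_{\mathrm{s}}(p)=\operatorname{st}_{\mathrm{s}}(p,S)=\{q\in S:[p,q]_{\mathrm{s}}\subseteq S\}$; $\ker_{\mathrm{s}}S=\{p\in S:\operatorname{st}_{\mathrm{s}}(p,S)=S\}$; $S$ is spindle starshaped if $\ker_{\mathrm{s}}S\ne\emptyset$. A point $x\in S$ is a spindle peak of $S$ if there is a neighborhood $U$ of $x$ such that $\operatorname{st}_{\mathrm{s}}(x',S)\subseteq\operatorname{st}_{\mathrm{s}}(x,S)$ for every $x'\in U\cap S$. *)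

theory Defs
  imports "HOL-Analysis.Analysis"
begin

definition spindle :: "'a::euclidean_space \<Rightarrow> 'a \<Rightarrow> 'a set" where
  "spindle x y = (if dist x y \<le> 2
     then \<Inter> {cball c 1 | c. x \<in> cball c 1 \<and> y \<in> cball c 1}
     else UNIV)"

definition spindle_star :: "'a::euclidean_space \<Rightarrow> 'a set \<Rightarrow> 'a set" where
  "spindle_star p S = {q \<in> S. spindle p q \<subseteq> S}"

definition spindle_kernel :: "'a::euclidean_space set \<Rightarrow> 'a set" where
  "spindle_kernel S = {p \<in> S. spindle_star p S = S}"

definition spindle_starshaped :: "'a::euclidean_space set \<Rightarrow> bool" where
  "spindle_starshaped S \<longleftrightarrow> spindle_kernel S \<noteq> {}"

definition spindle_peak :: "'a::euclidean_space \<Rightarrow> 'a set \<Rightarrow> bool" where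
  "spindle_peak x S \<longleftrightarrow> x \<in> S \<and>
     (\<exists>U. open U \<and> x \<in> U \<and> (\<forall>x' \<in> U \<inter> S. spindle_star x' S \<subseteq> spindle_star x S))"

end

theory Submission
  imports Defs
begin

text \<open>
  Let \<open>T\<close> be the spindle star of the peak \<open>x\<close>. \<open>T\<close> is closed: a point strictly inside every
  unit ball through \<open>x\<close> and \<open>z\<close> stays in the spindle of \<open>x\<close> and every \<open>z'\<close> near \<open>z\<close>, and such
  points are dense in the spindle of \<open>x\<close> and \<open>z\<close>. The set \<open>interior S \<inter> T\<close> is open: for \<open>z\<close> in it
  and \<open>y\<close> strictly between \<open>x\<close> and \<open>z\<close>, the spindle of \<open>y\<close> and \<open>z\<close> lies in the interior of the
  spindle of \<open>x\<close> and \<open>z\<close> (apart from \<open>z\<close> itself), hence in \<open>interior S\<close>, and by compactness so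
  do its small translates. The translate ending at \<open>z'\<close> near \<open>z\<close> starts near \<open>x\<close>, so \<open>z'\<close> lies
  in the star of a point near \<open>x\<close>, which is contained in \<open>T\<close> by the peak property. Points of \<open>S\<close>
  near \<open>x\<close> lie in \<open>T\<close>, so by connectedness \<open>interior S \<subseteq> T\<close>, and taking closures \<open>T = S\<close>.
\<close>

section \<open>Basic properties of spindles\<close>

lemma mem_spindle:
  assumes "dist p q \<le> 2"
  shows "w \<in> spindle p q \<longleftrightarrow> (\<forall>c. dist c p \<le> 1 \<longrightarrow> dist c q \<le> 1 \<longrightarrow> dist c w \<le> 1)"
  using assms unfolding spindle_def by (auto simp: mem_cball)

lemma spindle_far: "2 < dist p q \<Longrightarrow> spindle p q = UNIV"
  unfolding spindle_def by auto

lemma closed_spindle: "closed (spindle p q)"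
  unfolding spindle_def by (auto intro!: closed_Inter)

lemma spindle_endpoints:
  assumes "dist p q \<le> 2"
  shows "p \<in> spindle p q" "q \<in> spindle p q"
  using assms by (auto simp: mem_spindle)

lemma bounded_spindle:
  assumes "dist p q \<le> 2"
  shows "bounded (spindle p q)"
proof -
  have "dist (midpoint p q) p \<le> 1" "dist (midpoint p q) q \<le> 1"
    using assms by (simp_all add: dist_midpoint)
  then have "spindle p q \<subseteq> cball (midpoint p q) 1"
    using assms by (auto simp: mem_spindle)
  then show ?thesis
    using bounded_cball bounded_subset by blast
qed

lemma compact_spindle: "dist p q \<le> 2 \<Longrightarrow> compact (spindle p q)"
  by (simp add: compact_eq_bounded_closed bounded_spindle closed_spindle)

lemma dist_le_2_if_spindle_subset_bounded:
  assumes "bounded S" "spindle p q \<subseteq> S"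
  shows "dist p q \<le> 2"
  using assms not_bounded_UNIV bounded_subset spindle_far by (metis not_le)

lemma spindle_refl: "spindle p p = {p}"
proof -
  have "w = p" if "w \<in> spindle p p" for w
  proof (rule ccontr)
    assume "w \<noteq> p"
    then have n: "norm (w - p) > 0" by simp
    \<comment> \<open>the unit ball through \<open>p\<close> centred on the far side of \<open>p\<close> from \<open>w\<close> misses \<open>w\<close>\<close>
    define c where "c = p - (1 / norm (w - p)) *\<^sub>R (w - p)"
    have "dist c p = 1"
      using n by (simp add: c_def dist_norm)
    have "c - w = - ((1 + 1 / norm (w - p)) *\<^sub>R (w - p))"
      by (simp add: c_def algebra_simps)
    then have "norm (c - w) = (1 + 1 / norm (w - p)) * norm (w - p)"
      using n by (simp add: add_pos_pos)
    then have "dist c w = 1 + norm (w - p)"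
      using n by (simp add: dist_norm field_simps)
    moreover have "dist c w \<le> 1"
      using that \<open>dist c p = 1\<close> by (simp add: mem_spindle)
    ultimately show False
      using n by linarith
  qed
  then show ?thesis
    by (auto simp: spindle_endpoints)
qed

lemma spindle_translate:
  assumes "w \<in> spindle (p + v) (q + v)"
  shows "w - v \<in> spindle p q"
proof (cases "dist p q \<le> 2")
  case True
  have "dist (p + v) (q + v) \<le> 2"
    using True by (simp add: dist_norm)
  then have "dist (c + v) w \<le> 1" if "dist c p \<le> 1" "dist c q \<le> 1" for c
    using assms that by (auto simp: mem_spindle dist_norm)
  then show ?thesis
    using True by (auto simp: mem_spindle dist_norm algebra_simps)
next
  case False
  then show ?thesis
    by (simp add: spindle_far)
qed

section \<open>Interior points of spindles\<close>

lemma norm_convex_comb_sq: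
  fixes a b :: "'a::real_inner"
  shows "(norm ((1 - s) *\<^sub>R a + s *\<^sub>R b))\<^sup>2
    = (1 - s) * (norm a)\<^sup>2 + s * (norm b)\<^sup>2 - s * (1 - s) * (norm (a - b))\<^sup>2"
  unfolding power2_norm_eq_inner by (simp add: inner_simps inner_commute algebra_simps)

lemma dist_convex_comb_lt_1:
  fixes c p q :: "'a::real_inner"
  assumes "dist c p \<le> 1" "dist c q \<le> 1" "p \<noteq> q" "0 < s" "s < 1"
  shows "dist c ((1 - s) *\<^sub>R p + s *\<^sub>R q) < 1"
proof -
  have "c - ((1 - s) *\<^sub>R p + s *\<^sub>R q) = (1 - s) *\<^sub>R (c - p) + s *\<^sub>R (c - q)"
    by (simp add: algebra_simps)
  then have "(dist c ((1 - s) *\<^sub>R p + s *\<^sub>R q))\<^sup>2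
      = (1 - s) * (norm (c - p))\<^sup>2 + s * (norm (c - q))\<^sup>2 - s * (1 - s) * (norm (q - p))\<^sup>2"
    by (simp add: dist_norm norm_convex_comb_sq)
  also have "\<dots> < 1"
  proof -
    have "(norm (c - p))\<^sup>2 \<le> 1" "(norm (c - q))\<^sup>2 \<le> 1"
      using assms by (auto simp: dist_norm power_le_one)
    moreover have "s * (1 - s) * (norm (q - p))\<^sup>2 > 0"
      using assms by simp
    ultimately show ?thesis
      using assms by (smt (verit) mult_left_le)
  qed
  finally show ?thesis
    by (simp add: power_less_one_iff)
qed

lemma dist_lt_1_if_mem_shrunk_spindle:
  fixes p q w c :: "'a::euclidean_space"
  assumes pq: "p \<noteq> q" "dist p q \<le> 2" and s: "0 < s" "s < 1"
    and w: "w \<in> spindle ((1 - s) *\<^sub>R p + s *\<^sub>R q) q" "w \<noteq> q"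
    and c: "dist c p \<le> 1" "dist c q \<le> 1"
  shows "dist c w < 1"
proof -
  define y where "y = (1 - s) *\<^sub>R p + s *\<^sub>R q"
  have "y - q = (1 - s) *\<^sub>R (p - q)"
    by (simp add: y_def algebra_simps)
  then have "dist y q = (1 - s) * dist p q"
    using s by (simp add: dist_norm)
  also have "\<dots> \<le> 2"
    using s pq by (smt (verit) mult_left_le_one_le zero_le_dist)
  finally have dy: "dist y q \<le> 2" .
  have cy: "dist c y < 1"
    unfolding y_def by (rule dist_convex_comb_lt_1) (use c pq s in auto)
  \<comment> \<open>Push \<open>c\<close> a little in the direction \<open>q - w\<close>: it stays in both balls around \<open>y\<close> and \<open>q\<close>.\<close>
  define u where "u = q - w"
  have u: "norm u > 0"
    using w by (simp add: u_def)
  define \<eta> where "\<eta> = min 1 ((1 - dist c y) / norm u)"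
  have \<eta>: "0 < \<eta>" "\<eta> \<le> 1" "\<eta> * norm u \<le> 1 - dist c y"
    using u cy by (auto simp: \<eta>_def min_def field_simps)
  define c' where "c' = c + \<eta> *\<^sub>R u"
  have "dist c' y \<le> dist c y + \<eta> * norm u"
    using dist_triangle[of c' y c] \<eta> by (simp add: c'_def dist_norm)
  then have "dist c' y \<le> 1"
    using \<eta> by linarith
  moreover have "dist c' q \<le> 1"
  proof -
    have "c' - q = (1 - \<eta>) *\<^sub>R (c - q) + \<eta> *\<^sub>R (c - w)"
      by (simp add: c'_def u_def algebra_simps)
    then have "dist c' q \<le> (1 - \<eta>) * dist c q + \<eta> * dist c w"
      using \<eta> norm_triangle_ineq[of "(1 - \<eta>) *\<^sub>R (c - q)" "\<eta> *\<^sub>R (c - w)"]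
      by (simp add: dist_norm)
    moreover have "dist c w \<le> 1"
      using w c cy dy by (auto simp: mem_spindle y_def)
    ultimately show ?thesis
      using c \<eta> by (smt (verit) mult_left_le)
  qed
  ultimately have c'w: "dist c' w \<le> 1"
    using w dy by (auto simp: mem_spindle y_def)
  \<comment> \<open>\<open>c - w\<close> lies strictly between \<open>c - q\<close> and \<open>c' - w\<close>, both of norm at most one.\<close>
  define t where "t = 1 / (1 + \<eta>)"
  have t: "0 < t" "t < 1"
    using \<eta> by (auto simp: t_def)
  have "c - w = (1 - t) *\<^sub>R (c - q) + t *\<^sub>R (c' - w)"
  proof -
    have "t *\<^sub>R ((1 + \<eta>) *\<^sub>R u) = u"
      using \<eta> by (simp add: t_def)
    then show ?thesis
      by (simp add: c'_def u_def algebra_simps)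
  qed
  moreover have "dist 0 ((1 - t) *\<^sub>R (c - q) + t *\<^sub>R (c' - w)) < 1"
  proof (rule dist_convex_comb_lt_1)
    have "(c' - w) - (c - q) = (1 + \<eta>) *\<^sub>R u"
      by (simp add: c'_def u_def algebra_simps)
    then show "c - q \<noteq> c' - w"
      using u \<eta> by auto
  qed (use c c'w t in \<open>simp_all add: dist_norm norm_minus_commute\<close>)
  ultimately show ?thesis
    by (metis dist_0_norm dist_norm)
qed

lemma ball_subset_spindle_if_mem_shrunk_spindle:
  fixes p q w :: "'a::euclidean_space"
  assumes pq: "p \<noteq> q" "dist p q \<le> 2" and s: "0 < s" "s < 1"
    and w: "w \<in> spindle ((1 - s) *\<^sub>R p + s *\<^sub>R q) q" "w \<noteq> q"
  obtains \<delta> where "\<delta> > 0" "ball w \<delta> \<subseteq> spindle p q"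
proof -
  define C where "C = cball p 1 \<inter> cball q (1::real)"
  have "midpoint p q \<in> C"
    using pq(2) by (simp add: C_def mem_cball dist_midpoint)
  then have "C \<noteq> {}"
    by auto
  moreover have "compact C" "continuous_on C (\<lambda>c. dist c w)"
    by (auto simp: C_def compact_Int intro!: continuous_intros)
  ultimately obtain c0 where c0: "c0 \<in> C" "\<And>c. c \<in> C \<Longrightarrow> dist c w \<le> dist c0 w"
    using continuous_attains_sup[of C "\<lambda>c. dist c w"] by blast
  have "dist c0 w < 1"
    using c0(1) dist_lt_1_if_mem_shrunk_spindle[OF pq s w]
    by (simp add: C_def mem_cball dist_commute)
  moreover have "ball w (1 - dist c0 w) \<subseteq> spindle p q"
  proof
    fix u assume u: "u \<in> ball w (1 - dist c0 w)"
    have "dist c u \<le> 1" if "dist c p \<le> 1" "dist c q \<le> 1" for c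
    proof -
      have "dist c w \<le> dist c0 w"
        using c0(2) that by (simp add: C_def mem_cball dist_commute)
      then show ?thesis
        using u dist_triangle[of c u w] by (simp add: mem_ball)
    qed
    then show "u \<in> spindle p q"
      using pq(2) by (simp add: mem_spindle)
  qed
  ultimately show ?thesis
    using that[of "1 - dist c0 w"] by simp
qed

lemma shrunk_spindle_subset_interior:
  fixes p q :: "'a::euclidean_space"
  assumes "spindle p q \<subseteq> S" "q \<in> interior S" "0 < s" "s < 1"
  shows "spindle ((1 - s) *\<^sub>R p + s *\<^sub>R q) q \<subseteq> interior S"
proof (cases "dist p q \<le> 2")
  case True
  show ?thesis
  proof
    fix w assume w: "w \<in> spindle ((1 - s) *\<^sub>R p + s *\<^sub>R q) q"
    show "w \<in> interior S"
    proof (cases "w = q \<or> p = q")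
      case True
      then show ?thesis
        using w assms(2) by (auto simp: spindle_refl scaleR_left_diff_distrib)
    next
      case False
      then obtain \<delta> where "\<delta> > 0" "ball w \<delta> \<subseteq> spindle p q"
        using ball_subset_spindle_if_mem_shrunk_spindle True assms(3,4) w by metis
      then show ?thesis
        using assms(1) by (auto simp: mem_interior)
    qed
  qed
next
  case False
  then have "S = UNIV"
    using assms(1) by (auto simp: spindle_far)
  then show ?thesis
    by simp
qed

lemma translated_spindles_subset_interior:
  assumes "spindle y z \<subseteq> interior S" "dist y z \<le> 2"
  obtains d where "d > 0" "\<And>v. norm v < d \<Longrightarrow> spindle (y + v) (z + v) \<subseteq> interior S"
proof -
  have "\<exists>d>0. \<forall>w\<in>spindle y z. \<forall>u\<in>- interior S. d \<le> dist w u"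
    by (rule separate_compact_closed) (use assms compact_spindle in auto)
  then obtain d where d: "d > 0" "\<And>w u. w \<in> spindle y z \<Longrightarrow> u \<notin> interior S \<Longrightarrow> d \<le> dist w u"
    by auto
  have "spindle (y + v) (z + v) \<subseteq> interior S" if "norm v < d" for v
  proof
    fix w assume "w \<in> spindle (y + v) (z + v)"
    then have "w - v \<in> spindle y z"
      by (rule spindle_translate)
    moreover have "dist (w - v) w < d"
      using that by (simp add: dist_norm)
    ultimately show "w \<in> interior S"
      using d(2) by force
  qed
  then show ?thesis
    using that d(1) by blast
qed

section \<open>Closedness of spindle stars\<close>

lemma mem_spindle_near_if_strict:
  assumes "dist p q \<le> 2"
    and strict: "\<And>c. dist c p \<le> 1 \<Longrightarrow> dist c q \<le> 1 \<Longrightarrow> dist c w < 1"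
  obtains e where "e > 0" "\<And>q'. dist q q' < e \<Longrightarrow> w \<in> spindle p q'"
proof -
  define D where "D = cball p 1 - ball w (1::real)"
  have far: "dist c q > 1" if "c \<in> D" for c
    using that strict by (force simp: D_def mem_cball mem_ball dist_commute)
  have near: "w \<in> spindle p q'" if "\<And>c. c \<in> D \<Longrightarrow> dist c q' > 1" for q'
  proof (cases "dist p q' \<le> 2")
    case True
    then show ?thesis
      using that by (force simp: mem_spindle D_def mem_cball mem_ball dist_commute)
  qed (simp add: spindle_far)
  show ?thesis
  proof (cases "D = {}")
    case True
    then show ?thesis
      using near that[of 1] by auto
  next
    case False
    have "compact D" "continuous_on D (\<lambda>c. dist c q)"
      by (auto simp: D_def compact_diff intro!: continuous_intros)
    then obtain c0 where c0: "c0 \<in> D" "\<And>c. c \<in> D \<Longrightarrow> dist c0 q \<le> dist c q"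
      using continuous_attains_inf[OF _ False] by blast
    have "w \<in> spindle p q'" if "dist q q' < dist c0 q - 1" for q'
    proof (rule near)
      fix c assume "c \<in> D"
      then show "dist c q' > 1"
        using c0(2)[of c] that dist_triangle[of c q q'] dist_commute[of q' q] by linarith
    qed
    then show ?thesis
      using that[of "dist c0 q - 1"] far[OF c0(1)] by simp
  qed
qed

lemma strict_points_dense_in_spindle:
  assumes "p \<noteq> q" "dist p q \<le> 2" "w \<in> spindle p q" "\<epsilon> > 0"
  obtains w' where "dist w' w < \<epsilon>" "\<And>c. dist c p \<le> 1 \<Longrightarrow> dist c q \<le> 1 \<Longrightarrow> dist c w' < 1"
proof -
  define m where "m = (1 - 1 / 2) *\<^sub>R p + (1 / 2 :: real) *\<^sub>R q"
  define t where "t = min 1 (\<epsilon> / (norm (m - w) + 1))"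
  have t: "0 < t" "t \<le> 1" "t * (norm (m - w) + 1) \<le> \<epsilon>"
    using assms(4) by (auto simp: t_def min_def field_simps add_pos_nonneg)
  define w' where "w' = (1 - t) *\<^sub>R w + t *\<^sub>R m"
  have "w' - w = t *\<^sub>R (m - w)"
    by (simp add: w'_def algebra_simps)
  then have "dist w' w = t * norm (m - w)"
    using t by (simp add: dist_norm)
  then have "dist w' w < \<epsilon>"
    using t by (simp add: distrib_left)
  moreover have "dist c w' < 1" if c: "dist c p \<le> 1" "dist c q \<le> 1" for c
  proof -
    have cm: "dist c m < 1"
      unfolding m_def by (rule dist_convex_comb_lt_1) (use c assms(1) in auto)
    have cw: "dist c w \<le> 1"
      using assms(2,3) c by (auto simp: mem_spindle)
    have "c - w' = (1 - t) *\<^sub>R (c - w) + t *\<^sub>R (c - m)"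
      by (simp add: w'_def algebra_simps)
    then have "dist c w' \<le> (1 - t) * dist c w + t * dist c m"
      using t norm_triangle_ineq[of "(1 - t) *\<^sub>R (c - w)" "t *\<^sub>R (c - m)"]
      by (simp add: dist_norm)
    also have "\<dots> < 1"
      using t cw cm by (smt (verit) mult_left_le mult_strict_left_mono)
    finally show ?thesis .
  qed
  ultimately show ?thesis
    using that by blast
qed

lemma closed_spindle_star:
  assumes "compact S"
  shows "closed (spindle_star x S)"
proof -
  let ?T = "spindle_star x S"
  have clS: "closed S" and bS: "bounded S"
    using assms by (auto simp: compact_eq_bounded_closed)
  have "z \<in> ?T" if z: "z \<in> closure ?T" for z
  proof -
    have zS: "z \<in> S"
      using z clS closure_minimal[of ?T S] by (auto simp: spindle_star_def)
    have "?T \<subseteq> cball x 2"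
      using dist_le_2_if_spindle_subset_bounded[OF bS] by (auto simp: spindle_star_def)
    then have "closure ?T \<subseteq> cball x 2"
      by (simp add: closure_minimal)
    then have d2: "dist x z \<le> 2"
      using z by auto
    have "w \<in> S" if w: "w \<in> spindle x z" for w
    proof (cases "x = z")
      case True
      then show ?thesis
        using w zS by (simp add: spindle_refl)
    next
      case False
      \<comment> \<open>Points strictly inside all unit balls through \<open>x, z\<close> lie in \<open>spindle x z'\<close> for \<open>z' \<in> ?T\<close> close to \<open>z\<close>.\<close>
      have "\<exists>w'\<in>S. dist w' w < \<epsilon>" if "\<epsilon> > 0" for \<epsilon>
      proof -
        obtain w' where w': "dist w' w < \<epsilon>"
          "\<And>c. dist c x \<le> 1 \<Longrightarrow> dist c z \<le> 1 \<Longrightarrow> dist c w' < 1"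
          using strict_points_dense_in_spindle[OF False d2 w \<open>\<epsilon> > 0\<close>] by blast
        obtain e where e: "e > 0" "\<And>z'. dist z z' < e \<Longrightarrow> w' \<in> spindle x z'"
          using mem_spindle_near_if_strict[OF d2 w'(2)] by blast
        obtain z' where "z' \<in> ?T" "dist z' z < e"
          using z e(1) closure_approachable by blast
        then have "w' \<in> S"
          using e(2) by (auto simp: spindle_star_def dist_commute)
        then show ?thesis
          using w'(1) by blast
      qed
      then show ?thesis
        using clS closure_approachable closure_closed by blast
    qed
    then show ?thesis
      using zS by (auto simp: spindle_star_def)
  qed
  then show ?thesis
    using closure_subset_eq by blast
qed

section \<open>Openness near a spindle peak\<close>

lemma open_interior_Int_spindle_star:
  fixes S :: "'a::euclidean_space set"
  assumes "bounded S" "r > 0"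
    and peak: "\<And>y. y \<in> S \<Longrightarrow> dist x y < r \<Longrightarrow> spindle_star y S \<subseteq> spindle_star x S"
  shows "open (interior S \<inter> spindle_star x S)"
  unfolding open_contains_ball
proof
  fix z assume z: "z \<in> interior S \<inter> spindle_star x S"
  then have xz: "spindle x z \<subseteq> S"
    by (simp add: spindle_star_def)
  then have d2: "dist x z \<le> 2"
    using dist_le_2_if_spindle_subset_bounded[OF assms(1)] by blast
  \<comment> \<open>The shrunk spindle from \<open>y\<close> to \<open>z\<close> lies in \<open>interior S\<close>, and \<open>y\<close> is close to \<open>x\<close>; slide it.\<close>
  define s where "s = min (1/2) (r/4)"
  have s: "0 < s" "s < 1"
    using assms(2) by (auto simp: s_def)
  define y where "y = (1 - s) *\<^sub>R x + s *\<^sub>R z"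
  have "x - y = s *\<^sub>R (x - z)"
    by (simp add: y_def algebra_simps)
  then have "dist x y = s * dist x z"
    using s by (simp add: dist_norm)
  also have "\<dots> \<le> (r / 4) * 2"
    using s d2 assms(2) by (intro mult_mono) (simp_all add: s_def)
  finally have xy: "dist x y \<le> r / 2" by simp
  have "y - z = (1 - s) *\<^sub>R (x - z)"
    by (simp add: y_def algebra_simps)
  then have "dist y z = (1 - s) * dist x z"
    using s by (simp add: dist_norm)
  also have "\<dots> \<le> 2"
    using s d2 by (smt (verit) mult_left_le_one_le zero_le_dist)
  finally have yz: "dist y z \<le> 2" .
  have "spindle y z \<subseteq> interior S"
    unfolding y_def by (rule shrunk_spindle_subset_interior[OF xz _ s]) (use z in simp)
  then obtain d where d: "d > 0" "\<And>v. norm v < d \<Longrightarrow> spindle (y + v) (z + v) \<subseteq> interior S"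
    using translated_spindles_subset_interior yz by blast
  have "ball z (min d (r/2)) \<subseteq> interior S \<inter> spindle_star x S"
  proof
    fix z' assume "z' \<in> ball z (min d (r/2))"
    then have v: "norm (z' - z) < d" "norm (z' - z) < r/2"
      by (auto simp: dist_norm norm_minus_commute)
    define y' where "y' = y + (z' - z)"
    have K: "spindle y' z' \<subseteq> interior S"
      using d(2)[OF v(1)] by (simp add: y'_def)
    have "dist y' z' \<le> 2"
      using yz by (simp add: y'_def dist_norm)
    then have "y' \<in> interior S" "z' \<in> interior S"
      using K spindle_endpoints by blast+
    moreover have "dist x y' < r"
      using xy v(2) dist_triangle[of x y' y] by (simp add: y'_def dist_norm norm_minus_commute)
    moreover have "z' \<in> spindle_star y' S"
      using K \<open>z' \<in> interior S\<close> interior_subset by (auto simp: spindle_star_def)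
    ultimately show "z' \<in> interior S \<inter> spindle_star x S"
      using peak interior_subset by blast
  qed
  then show "\<exists>e>0. ball z e \<subseteq> interior S \<inter> spindle_star x S"
    using d(1) assms(2) by (intro exI[of _ "min d (r/2)"]) auto
qed

lemma connected_subset_closed_if_open_Int:
  assumes "connected C" "closed T" "open (C \<inter> T)" "C \<inter> T \<noteq> {}"
  shows "C \<subseteq> T"
  using connectedD[OF assms(1,3) open_Compl[OF assms(2)]] assms(4) by blast

theorem theorem4:
  fixes S :: "'a::euclidean_space set" and x :: 'a
  assumes "compact S"
    and "closure (interior S) = S"
    and "connected (interior S)"
    and "spindle_peak x S"
  shows "x \<in> spindle_kernel S \<and> spindle_starshaped S"
proof -
  let ?T = "spindle_star x S"
  obtain U where "open U" "x \<in> U" and xS: "x \<in> S"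
    and U: "\<And>y. y \<in> U \<inter> S \<Longrightarrow> spindle_star y S \<subseteq> ?T"
    using assms(4) unfolding spindle_peak_def by blast
  then obtain r where r: "r > 0" "ball x r \<subseteq> U"
    using open_contains_ball by blast
  have peak: "spindle_star y S \<subseteq> ?T" if "y \<in> S" "dist x y < r" for y
    using U[of y] r(2) that by (auto simp: subset_iff)
  have near: "y \<in> ?T" if "y \<in> S" "dist x y < r" for y
    using peak[OF that] that(1) by (auto simp: spindle_star_def spindle_refl)
  obtain z where "z \<in> interior S" "dist z x < r"
    using assms(2) xS r(1) closure_approachable by blast
  then have "interior S \<inter> ?T \<noteq> {}"
    using near interior_subset by (fastforce simp: dist_commute)
  then have "interior S \<subseteq> ?T"
    using connected_subset_closed_if_open_Int assms(1,3) closed_spindle_star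
      open_interior_Int_spindle_star[OF compact_imp_bounded[OF assms(1)] r(1) peak]
    by blast
  then have "S \<subseteq> ?T"
    using assms(2) closure_minimal[OF _ closed_spindle_star[OF assms(1)]] by metis
  then have "?T = S"
    by (auto simp: spindle_star_def)
  then show ?thesis
    using xS by (auto simp: spindle_kernel_def spindle_starshaped_def)
qed

end
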